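(* Every M-set in a Minkowski space is countable.
   Context: A Minkowski space is a finite-dimensional real normed space $(X,\|\cdot\|)$. For a set $S\subseteq X$, its midpoint set is $M(S)=\{\tfrac12(x+y): x,y\in S,\ x\neq y\}$. A set $S\subseteq X$ is an M-set if every vector in $M(S)$ has norm exactly $1$ and every vector in $S$ has norm strictly greater than $1$. *)

theory Defs
  imports "HOL-Analysis.Analysis"
begin

definition midpoint_set :: "'a::real_vector set \<Rightarrow> 'a set" where
  "midpoint_set S = {(1/2) *\<^sub>R (x + y) | x y. x \<in> S \<and> y \<in> S \<and> x \<noteq> y}"

definition M_set :: "'a::real_normed_vector set \<Rightarrow> bool" where
  "M_set S \<longleftrightarrow> (\<forall>m\<in>midpoint_set S. norm m = 1) \<and> (\<forall>x\<in>S. norm x > 1)"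

end

theory Submission
  imports Defs
begin

(*
  Idea: if x, y are distinct points of S then |x + y| = 2, so the triangle
  inequality gives |x - y| >= 2|x| - 2 and symmetrically |x - y| >= 2|y| - 2.
  Hence the open balls of radius |x| - 1 > 0 around the points x of S are
  pairwise disjoint.  A finite-dimensional space has a countable dense set
  (rational combinations of a finite spanning set), and choosing a dense point
  inside each ball maps S injectively into it.
*)

definition rational_combinations :: "'a::real_vector set \<Rightarrow> 'a set" where
  "rational_combinations B = (\<lambda>q. \<Sum>b\<in>B. q b *\<^sub>R b) ` PiE B (\<lambda>_. \<rat>)"

lemma countable_rational_combinations:
  assumes "finite B"
  shows "countable (rational_combinations B)"
  unfolding rational_combinations_def
  by (intro countable_image countable_PiE assms countable_rat)

text \<open>If B is finite and spans the space, rational combinations of B are dense: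
  approximate each real coordinate closely enough by a rational number.\<close>
lemma rational_combinations_dense:
  fixes B :: "'a::real_normed_vector set"
  assumes fin: "finite B" and spans: "span B = UNIV" and e: "e > 0"
  shows "\<exists>d\<in>rational_combinations B. dist x d < e"
proof -
  obtain c where x_eq: "x = (\<Sum>b\<in>B. c b *\<^sub>R b)"
    using span_finite[OF fin] spans by (metis (no_types, lifting) UNIV_I imageE)
  define k where "k = e / (real (card B) + 1)"
  have k: "k > 0" using e by (simp add: k_def)
  have "\<exists>r\<in>\<rat>. \<bar>c b - r\<bar> < k / (norm b + 1)" for b
  proof -
    have "k / (norm b + 1) > 0" using k by (simp add: add_nonneg_pos)
    then obtain r where "r \<in> \<rat>" "c b - k / (norm b + 1) < r" "r < c b"
      using Rats_dense_in_real[of "c b - k / (norm b + 1)" "c b"] by auto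
    then show ?thesis by (intro bexI[of _ r]) auto
  qed
  then obtain q0 where q0_rat: "\<And>b. q0 b \<in> \<rat>"
    and q0_close: "\<And>b. \<bar>c b - q0 b\<bar> < k / (norm b + 1)"
    by metis
  define q where "q = restrict q0 B"
  have q_in: "q \<in> PiE B (\<lambda>_. \<rat>)" using q0_rat by (simp add: q_def)
  have coord_err: "\<bar>c b - q0 b\<bar> * norm b \<le> k" for b
  proof -
    have "\<bar>c b - q0 b\<bar> * norm b \<le> \<bar>c b - q0 b\<bar> * (norm b + 1)"
      by (simp add: mult_left_mono)
    also have "\<dots> < k"
      using q0_close[of b] by (simp add: less_divide_eq add_nonneg_pos)
    finally show ?thesis by simp
  qed
  have "x - (\<Sum>b\<in>B. q b *\<^sub>R b) = (\<Sum>b\<in>B. (c b - q0 b) *\<^sub>R b)"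
    by (simp add: x_eq q_def scaleR_diff_left sum_subtractf)
  then have "norm (x - (\<Sum>b\<in>B. q b *\<^sub>R b)) \<le> (\<Sum>b\<in>B. \<bar>c b - q0 b\<bar> * norm b)"
    using norm_sum[of "\<lambda>b. (c b - q0 b) *\<^sub>R b" B] by simp
  also have "\<dots> \<le> real (card B) * k"
    using sum_mono[of B "\<lambda>b. \<bar>c b - q0 b\<bar> * norm b" "\<lambda>_. k"] coord_err by simp
  also have "\<dots> < e"
    using e by (simp add: k_def field_simps)
  finally show ?thesis
    using q_in unfolding rational_combinations_def dist_norm by blast
qed

text \<open>In a metric space with a countable dense set D, a set S whose points carry
  pairwise disjoint balls of positive radii r x is countable: picking a point of D
  in each ball is injective on S.\<close>
lemma countable_if_disjoint_balls:
  fixes S D :: "'a::metric_space set"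
  assumes D: "countable D"
    and dense: "\<And>x e. e > 0 \<Longrightarrow> \<exists>d\<in>D. dist x d < e"
    and pos: "\<And>x. x \<in> S \<Longrightarrow> r x > 0"
    and sep: "\<And>x y. x \<in> S \<Longrightarrow> y \<in> S \<Longrightarrow> x \<noteq> y \<Longrightarrow> r x + r y \<le> dist x y"
  shows "countable S"
proof -
  have "\<forall>x\<in>S. \<exists>d\<in>D. dist x d < r x" using dense pos by blast
  then obtain f where f_in: "\<And>x. x \<in> S \<Longrightarrow> f x \<in> D"
    and f_close: "\<And>x. x \<in> S \<Longrightarrow> dist x (f x) < r x"
    by metis
  have "inj_on f S"
  proof (rule inj_onI, rule ccontr)
    fix x y assume x: "x \<in> S" and y: "y \<in> S" and same: "f x = f y" and "x \<noteq> y"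
    have "dist x y \<le> dist x (f x) + dist y (f y)"
      using dist_triangle3[of x y "f x"] same by (simp add: dist_commute)
    also have "\<dots> < r x + r y" using f_close x y by (simp add: add_strict_mono)
    finally show False using sep[OF x y \<open>x \<noteq> y\<close>] by simp
  qed
  moreover have "countable (f ` S)"
    using countable_subset[OF _ D] f_in by blast
  ultimately show ?thesis using countable_image_inj_on by blast
qed

lemma M_set_norm_gt_one: "M_set S \<Longrightarrow> x \<in> S \<Longrightarrow> norm x > 1"
  by (simp add: M_set_def)

text \<open>Separation in an M-set: since the midpoint of distinct x, y has norm 1,
  2|x| = |(x + y) + (x - y)| \<le> 2 + |x - y|.\<close>
lemma M_set_separation:
  assumes M: "M_set S" and x: "x \<in> S" and y: "y \<in> S" and xy: "x \<noteq> y"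
  shows "2 * norm x - 2 \<le> norm (x - y)"
proof -
  have "(1/2) *\<^sub>R (x + y) \<in> midpoint_set S"
    using x y xy unfolding midpoint_set_def by blast
  then have "norm ((1/2) *\<^sub>R (x + y)) = 1" using M unfolding M_set_def by blast
  then have sum_norm: "norm (x + y) = 2" by simp
  have "2 * norm x = norm ((x + y) + (x - y))"
    by (simp add: scaleR_2[symmetric])
  also have "\<dots> \<le> norm (x + y) + norm (x - y)" by (rule norm_triangle_ineq)
  finally show ?thesis using sum_norm by simp
qed

theorem mainTheorem3:
  fixes S :: "'a::real_normed_vector set"
  assumes fin_dim: "\<exists>B. finite B \<and> span B = (UNIV :: 'a set)"
    and M: "M_set S"
  shows "countable S"
proof -
  obtain B :: "'a set" where fin: "finite B" and spans: "span B = UNIV"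
    using fin_dim by blast
  have disjoint_balls: "(norm x - 1) + (norm y - 1) \<le> dist x y"
    if "x \<in> S" "y \<in> S" "x \<noteq> y" for x y
    using M_set_separation[OF M that] M_set_separation[OF M that(2,1)] that(3)
    by (simp add: dist_norm norm_minus_commute)
  show ?thesis
  proof (rule countable_if_disjoint_balls[where r = "\<lambda>x. norm x - 1"])
    show "countable (rational_combinations B)"
      using fin by (rule countable_rational_combinations)
  qed (use rational_combinations_dense[OF fin spans] M_set_norm_gt_one[OF M]
         disjoint_balls in auto)
qed

end
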